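(* Let $A$ be a fuzzy ideal in a fuzzy Riesz space $(E,\mu)$, and let $E/A$ carry the quotient fuzzy order described in the context. The following are equivalent: (1) $E/A$ is a fuzzy Archimedean space; (2) $A$ is uniformly fuzzy closed; (3) whenever $\{x_n\}\subseteq A$ with $\mu(0,x_n)>\frac12$ for all $n$, the sequence $\{x_n\}$ is increasing and converges relatively uniformly in fuzzy order to $x\in E$, then $x\in A$; (4) whenever $x,w\in E^+$ and $(nx-w)^+\in A$ for all $n=1,2,\dots$, then $x\in A$.
   Context: A fuzzy order on a real vector space $E$ is a map $\mu:E\times E\to[0,1]$ with $\mu(x,x)=1$; $\mu(x,y)+\mu(y,x)>1$ implies $x=y$; and $\mu(x,z)\ge\sup_{y}\min(\mu(x,y),\mu(y,z))$. Write $x\le y$ for $\mu(x,y)>\frac12$; upper bounds, suprema and infima are taken with respect to this relation. $(E,\mu)$ is a fuzzy ordered linear space if $\mu(x_1,x_2)>\frac12$ implies $\mu(x_1,x_2)\le\mu(x_1+x,x_2+x)$ for all $x$ and $\mu(x_1,x_2)\le\mu(\alpha x_1,\alpha x_2)$ for all $\alpha>0$; it is a fuzzy Riesz space if $x\vee y=\sup\{x,y\}$ and $x\wedge y=\inf\{x,y\}$ exist for all $x,y$. $E^+=\{x:0\le x\}$, $x^+=x\vee0$, $|x|=x\vee(-x)$. A fuzzy ideal is a vector subspace $A$ such that $\mu(|x|,|y|)>\frac12$ and $y\in A$ imply $x\in A$. For $f\in E$, $[f]=f+A$; on the quotient vector space $E/A$ put $\nu([f],[g])=1$ if $[f]=[g]$,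 $\nu([f],[g])=\frac23$ if $[f]\neq[g]$ and there exist $f_1\in[f]$, $g_1\in[g]$ with $\mu(f_1,g_1)>\frac12$, and $\nu([f],[g])=0$ otherwise; $(E/A,\nu)$ is a fuzzy Riesz space. A fuzzy ordered vector space (in which every pair of elements has an upper bound) is fuzzy Archimedean if for every nonzero $x$ with $0\le x$ the set $\{\lambda x:\lambda>0\}$ is not bounded above. A sequence $\{x_n\}$ converges relatively uniformly in fuzzy order to $x$ if there is $w\in E^+$ such that for every $\varepsilon>0$ there is $n(\varepsilon)$ with $\mu(|x-x_n|,\varepsilon w)>\frac12$ for all $n>n(\varepsilon)$. A set $A$ is uniformly fuzzy closed if it contains the limit of every sequence in $A$ converging relatively uniformly in fuzzy order. *)

theory Defs
  imports Main "HOL-Analysis.Analysis"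
begin

definition fuzzy_order :: "('a \<Rightarrow> 'a \<Rightarrow> real) \<Rightarrow> bool" where
  "fuzzy_order \<mu> \<longleftrightarrow>
     (\<forall>x y. 0 \<le> \<mu> x y \<and> \<mu> x y \<le> 1) \<and>
     (\<forall>x. \<mu> x x = 1) \<and>
     (\<forall>x y. \<mu> x y + \<mu> y x > 1 \<longrightarrow> x = y) \<and>
     (\<forall>x z. (SUP y. min (\<mu> x y) (\<mu> y z)) \<le> \<mu> x z)"

definition fle :: "('a \<Rightarrow> 'a \<Rightarrow> real) \<Rightarrow> 'a \<Rightarrow> 'a \<Rightarrow> bool" where
  "fle \<mu> x y \<longleftrightarrow> \<mu> x y > 1/2"

definition fuzzy_ordered_linear_space :: "('a::real_vector \<Rightarrow> 'a \<Rightarrow> real) \<Rightarrow> bool" where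
  "fuzzy_ordered_linear_space \<mu> \<longleftrightarrow> fuzzy_order \<mu> \<and>
     (\<forall>x1 x2. \<mu> x1 x2 > 1/2 \<longrightarrow>
        (\<forall>x. \<mu> x1 x2 \<le> \<mu> (x1 + x) (x2 + x)) \<and>
        (\<forall>\<alpha>::real. \<alpha> > 0 \<longrightarrow> \<mu> x1 x2 \<le> \<mu> (\<alpha> *\<^sub>R x1) (\<alpha> *\<^sub>R x2)))"

definition is_fsup :: "('a \<Rightarrow> 'a \<Rightarrow> real) \<Rightarrow> 'a set \<Rightarrow> 'a \<Rightarrow> bool" where
  "is_fsup \<mu> S s \<longleftrightarrow> (\<forall>x\<in>S. fle \<mu> x s) \<and> (\<forall>u. (\<forall>x\<in>S. fle \<mu> x u) \<longrightarrow> fle \<mu> s u)"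

definition is_finf :: "('a \<Rightarrow> 'a \<Rightarrow> real) \<Rightarrow> 'a set \<Rightarrow> 'a \<Rightarrow> bool" where
  "is_finf \<mu> S s \<longleftrightarrow> (\<forall>x\<in>S. fle \<mu> s x) \<and> (\<forall>u. (\<forall>x\<in>S. fle \<mu> u x) \<longrightarrow> fle \<mu> u s)"

definition fuzzy_riesz_space :: "('a::real_vector \<Rightarrow> 'a \<Rightarrow> real) \<Rightarrow> bool" where
  "fuzzy_riesz_space \<mu> \<longleftrightarrow> fuzzy_ordered_linear_space \<mu> \<and>
     (\<forall>x y. (\<exists>s. is_fsup \<mu> {x, y} s) \<and> (\<exists>i. is_finf \<mu> {x, y} i))"

definition fsup :: "('a \<Rightarrow> 'a \<Rightarrow> real) \<Rightarrow> 'a \<Rightarrow> 'a \<Rightarrow> 'a" where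
  "fsup \<mu> x y = (THE s. is_fsup \<mu> {x, y} s)"

definition fpos :: "('a::real_vector \<Rightarrow> 'a \<Rightarrow> real) \<Rightarrow> 'a \<Rightarrow> 'a" where
  "fpos \<mu> x = fsup \<mu> x 0"

definition fabs :: "('a::real_vector \<Rightarrow> 'a \<Rightarrow> real) \<Rightarrow> 'a \<Rightarrow> 'a" where
  "fabs \<mu> x = fsup \<mu> x (- x)"

definition fuzzy_ideal :: "('a::real_vector \<Rightarrow> 'a \<Rightarrow> real) \<Rightarrow> 'a set \<Rightarrow> bool" where
  "fuzzy_ideal \<mu> A \<longleftrightarrow> subspace A \<and>
     (\<forall>x y. \<mu> (fabs \<mu> x) (fabs \<mu> y) > 1/2 \<and> y \<in> A \<longrightarrow> x \<in> A)"

definition coset :: "'a::real_vector set \<Rightarrow> 'a \<Rightarrow> 'a set" where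
  "coset A f = {f + a | a. a \<in> A}"

definition quot_space :: "'a::real_vector set \<Rightarrow> 'a set set" where
  "quot_space A = range (coset A)"

definition quot_mu :: "('a \<Rightarrow> 'a \<Rightarrow> real) \<Rightarrow> 'a set \<Rightarrow> 'a set \<Rightarrow> real" where
  "quot_mu \<mu> X Y = (if X = Y then 1
      else if \<exists>f1\<in>X. \<exists>g1\<in>Y. \<mu> f1 g1 > 1/2 then 2/3 else 0)"

definition fuzzy_archimedean_on ::
  "'b set \<Rightarrow> 'b \<Rightarrow> (real \<Rightarrow> 'b \<Rightarrow> 'b) \<Rightarrow> ('b \<Rightarrow> 'b \<Rightarrow> real) \<Rightarrow> bool" where
  "fuzzy_archimedean_on S z sm \<nu> \<longleftrightarrow>
     (\<forall>x\<in>S. x \<noteq> z \<and> \<nu> z x > 1/2 \<longrightarrow>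
        \<not> (\<exists>u\<in>S. \<forall>l::real. l > 0 \<longrightarrow> \<nu> (sm l x) u > 1/2))"

definition quot_archimedean :: "('a::real_vector \<Rightarrow> 'a \<Rightarrow> real) \<Rightarrow> 'a set \<Rightarrow> bool" where
  "quot_archimedean \<mu> A \<longleftrightarrow>
     fuzzy_archimedean_on (quot_space A) (coset A 0)
        (\<lambda>l X. (\<lambda>v. l *\<^sub>R v) ` X) (quot_mu \<mu>)"

definition ru_converges :: "('a::real_vector \<Rightarrow> 'a \<Rightarrow> real) \<Rightarrow> (nat \<Rightarrow> 'a) \<Rightarrow> 'a \<Rightarrow> bool" where
  "ru_converges \<mu> xs x \<longleftrightarrow> (\<exists>w. fle \<mu> 0 w \<and>
     (\<forall>\<epsilon>::real. \<epsilon> > 0 \<longrightarrow> (\<exists>N. \<forall>n>N. \<mu> (fabs \<mu> (x - xs n)) (\<epsilon> *\<^sub>R w) > 1/2)))"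

definition uniformly_fuzzy_closed :: "('a::real_vector \<Rightarrow> 'a \<Rightarrow> real) \<Rightarrow> 'a set \<Rightarrow> bool" where
  "uniformly_fuzzy_closed \<mu> A \<longleftrightarrow>
     (\<forall>xs x. (\<forall>n. xs n \<in> A) \<and> ru_converges \<mu> xs x \<longrightarrow> x \<in> A)"

end

theory Submission
  imports Defs
begin

text \<open>
  The quotient order is the order of E read modulo A: [f] \<le> [g] iff f \<le> g + a for some a in A.
  So E/A is Archimedean iff f is in A whenever f is positive modulo A and all multiples l f
  lie below a single g modulo A.
  If x_n in A converges relatively uniformly to x with regulator w, then l |x| \<le> w + l |x_n|
  for large n, so the multiples of [|x|] are bounded by [w], and an Archimedean quotient forces
  x into A. If (n x - w)^+ is in A for all n, then (x - w/n)^+ = (n x - w)^+/n is an increasing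
  sequence in A converging relatively uniformly to x. Finally, if [0] \<le> [f] and [l f] \<le> [g]
  for all l > 0, choose a positive representative x of [f]; then (n x - g^+)^+ is dominated by
  an element of A for every n.
\<close>

section \<open>Elementary fuzzy Riesz space calculus\<close>

locale fuzzy_riesz =
  fixes \<mu> :: "'a::real_vector \<Rightarrow> 'a \<Rightarrow> real"
  assumes fuzzy_riesz_space: "fuzzy_riesz_space \<mu>"
begin

lemma fuzzy_order: "fuzzy_order \<mu>"
  using fuzzy_riesz_space unfolding fuzzy_riesz_space_def fuzzy_ordered_linear_space_def by auto

lemma fle_refl: "fle \<mu> x x"
  using fuzzy_order unfolding fuzzy_order_def fle_def by auto

lemma fle_antisym: "fle \<mu> x y \<Longrightarrow> fle \<mu> y x \<Longrightarrow> x = y"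
  using fuzzy_order unfolding fuzzy_order_def fle_def by force

lemma fle_trans [trans]:
  assumes "fle \<mu> x y" "fle \<mu> y z"
  shows "fle \<mu> x z"
proof -
  have bdd: "bdd_above (range (\<lambda>y. min (\<mu> x y) (\<mu> y z)))"
    by (rule bdd_aboveI[of _ 1]) (use fuzzy_order in \<open>auto simp: fuzzy_order_def min_le_iff_disj\<close>)
  have "min (\<mu> x y) (\<mu> y z) \<le> (SUP y. min (\<mu> x y) (\<mu> y z))"
    by (rule cSUP_upper[OF _ bdd]) simp
  also have "\<dots> \<le> \<mu> x z"
    using fuzzy_order unfolding fuzzy_order_def by auto
  finally show ?thesis
    using assms unfolding fle_def by simp
qed

lemma fle_add_right:
  assumes "fle \<mu> x y"
  shows "fle \<mu> (x + z) (y + z)"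
proof -
  have "\<mu> x y \<le> \<mu> (x + z) (y + z)"
    using fuzzy_riesz_space assms
    unfolding fuzzy_riesz_space_def fuzzy_ordered_linear_space_def fle_def by blast
  with assms show ?thesis
    unfolding fle_def by linarith
qed

lemma fle_scaleR_left_mono:
  assumes "fle \<mu> x y" "0 \<le> a"
  shows "fle \<mu> (a *\<^sub>R x) (a *\<^sub>R y)"
proof (cases "a = 0")
  case True
  then show ?thesis by (simp add: fle_refl)
next
  case False
  with assms(2) have "\<mu> x y \<le> \<mu> (a *\<^sub>R x) (a *\<^sub>R y)"
    using fuzzy_riesz_space assms(1)
    unfolding fuzzy_riesz_space_def fuzzy_ordered_linear_space_def fle_def by auto
  with assms(1) show ?thesis
    unfolding fle_def by linarith
qed

lemma fle_add:
  assumes "fle \<mu> x y" "fle \<mu> u v"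
  shows "fle \<mu> (x + u) (y + v)"
proof -
  have "fle \<mu> (x + u) (y + u)"
    using assms(1) by (rule fle_add_right)
  moreover have "fle \<mu> (y + u) (y + v)"
    using fle_add_right[OF assms(2), of y] by (simp add: add.commute)
  ultimately show ?thesis
    by (rule fle_trans)
qed

lemma fle_iff_diff_nonneg: "fle \<mu> x y \<longleftrightarrow> fle \<mu> 0 (y - x)"
proof
  assume "fle \<mu> x y"
  then show "fle \<mu> 0 (y - x)"
    using fle_add_right[of x y "- x"] by simp
next
  assume "fle \<mu> 0 (y - x)"
  then show "fle \<mu> x y"
    using fle_add_right[of 0 "y - x" x] by simp
qed

lemma fle_diff_left_mono: "fle \<mu> a b \<Longrightarrow> fle \<mu> (x - b) (x - a)"
  by (simp add: fle_iff_diff_nonneg[of a] fle_iff_diff_nonneg[of "x - b"])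

lemma fle_scaleR_right_mono:
  assumes "fle \<mu> 0 w" "a \<le> b"
  shows "fle \<mu> (a *\<^sub>R w) (b *\<^sub>R w)"
  using fle_scaleR_left_mono[OF assms(1), of "b - a"] assms(2)
  by (simp add: fle_iff_diff_nonneg[of "a *\<^sub>R w"] scaleR_diff_left)

lemma fsup_is_fsup: "is_fsup \<mu> {x, y} (fsup \<mu> x y)"
proof -
  obtain s where s: "is_fsup \<mu> {x, y} s"
    using fuzzy_riesz_space unfolding fuzzy_riesz_space_def by blast
  moreover have "t = s" if "is_fsup \<mu> {x, y} t" for t
    using s that fle_antisym unfolding is_fsup_def by blast
  ultimately show ?thesis
    unfolding fsup_def by (rule theI)
qed

lemma fsup_upper1: "fle \<mu> x (fsup \<mu> x y)"
  and fsup_upper2: "fle \<mu> y (fsup \<mu> x y)"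
  and fsup_least: "fle \<mu> x u \<Longrightarrow> fle \<mu> y u \<Longrightarrow> fle \<mu> (fsup \<mu> x y) u"
  using fsup_is_fsup[of x y] unfolding is_fsup_def by blast+

lemma fsup_unique: "is_fsup \<mu> {x, y} s \<Longrightarrow> fsup \<mu> x y = s"
  using fsup_is_fsup fle_antisym unfolding is_fsup_def by blast

lemma fsup_absorb1: "fle \<mu> y x \<Longrightarrow> fsup \<mu> x y = x"
  by (rule fsup_unique) (auto simp: is_fsup_def fle_refl)

lemma fsup_mono: "fle \<mu> x x' \<Longrightarrow> fle \<mu> y y' \<Longrightarrow> fle \<mu> (fsup \<mu> x y) (fsup \<mu> x' y')"
  by (meson fle_trans fsup_upper1 fsup_upper2 fsup_least)

lemma fsup_scaleR:
  assumes "0 < a"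
  shows "fsup \<mu> (a *\<^sub>R x) (a *\<^sub>R y) = a *\<^sub>R fsup \<mu> x y"
proof (rule fsup_unique, unfold is_fsup_def, safe)
  show "fle \<mu> (a *\<^sub>R x) (a *\<^sub>R fsup \<mu> x y)" "fle \<mu> (a *\<^sub>R y) (a *\<^sub>R fsup \<mu> x y)"
    using assms by (auto intro: fle_scaleR_left_mono fsup_upper1 fsup_upper2)
next
  fix u assume u: "\<forall>z\<in>{a *\<^sub>R x, a *\<^sub>R y}. fle \<mu> z u"
  have "fle \<mu> (inverse a *\<^sub>R (a *\<^sub>R z)) (inverse a *\<^sub>R u)" if "z \<in> {x, y}" for z
    by (rule fle_scaleR_left_mono) (use that assms u in auto)
  with assms have "fle \<mu> (fsup \<mu> x y) (inverse a *\<^sub>R u)"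
    by (simp add: fsup_least)
  then have "fle \<mu> (a *\<^sub>R fsup \<mu> x y) (a *\<^sub>R (inverse a *\<^sub>R u))"
    by (rule fle_scaleR_left_mono) (use assms in simp)
  with assms show "fle \<mu> (a *\<^sub>R fsup \<mu> x y) u"
    by simp
qed

lemma fabs_ge_self: "fle \<mu> x (fabs \<mu> x)"
  and fabs_ge_minus: "fle \<mu> (- x) (fabs \<mu> x)"
  unfolding fabs_def by (rule fsup_upper1, rule fsup_upper2)

lemma fabs_nonneg: "fle \<mu> 0 (fabs \<mu> x)"
proof -
  have "fle \<mu> (x + - x) (fabs \<mu> x + fabs \<mu> x)"
    by (rule fle_add[OF fabs_ge_self fabs_ge_minus])
  then have "fle \<mu> ((1/2) *\<^sub>R 0) ((1/2) *\<^sub>R (2 *\<^sub>R fabs \<mu> x))"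
    by (intro fle_scaleR_left_mono) (simp_all add: scaleR_2)
  then show ?thesis
    by simp
qed

lemma fabs_of_nonneg:
  assumes "fle \<mu> 0 x"
  shows "fabs \<mu> x = x"
proof -
  have "fle \<mu> (- x) 0"
    using fle_diff_left_mono[OF assms, of 0] by simp
  then have "fle \<mu> (- x) x"
    using assms by (rule fle_trans)
  then show ?thesis
    unfolding fabs_def by (rule fsup_absorb1)
qed

lemma fabs_triangle: "fle \<mu> (fabs \<mu> (a + b)) (fabs \<mu> a + fabs \<mu> b)"
  unfolding fabs_def[of _ "a + b"]
proof (rule fsup_least)
  show "fle \<mu> (a + b) (fabs \<mu> a + fabs \<mu> b)"
    by (rule fle_add[OF fabs_ge_self fabs_ge_self])
  show "fle \<mu> (- (a + b)) (fabs \<mu> a + fabs \<mu> b)"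
    using fle_add[OF fabs_ge_minus fabs_ge_minus, of a b] by simp
qed

lemma fpos_ge_self: "fle \<mu> x (fpos \<mu> x)"
  and fpos_nonneg: "fle \<mu> 0 (fpos \<mu> x)"
  unfolding fpos_def by (rule fsup_upper1, rule fsup_upper2)

lemma fpos_le_fabs: "fle \<mu> (fpos \<mu> x) (fabs \<mu> x)"
  unfolding fpos_def by (rule fsup_least[OF fabs_ge_self fabs_nonneg])

lemma fpos_mono: "fle \<mu> x y \<Longrightarrow> fle \<mu> (fpos \<mu> x) (fpos \<mu> y)"
  unfolding fpos_def by (rule fsup_mono[OF _ fle_refl])

lemma fpos_scaleR: "0 < a \<Longrightarrow> fpos \<mu> (a *\<^sub>R x) = a *\<^sub>R fpos \<mu> x"
  using fsup_scaleR[of a x 0] unfolding fpos_def by simp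

end

lemma fuzzy_ideal_subspace: "fuzzy_ideal \<mu> A \<Longrightarrow> subspace A"
  unfolding fuzzy_ideal_def by blast

context fuzzy_riesz
begin

lemma fuzzy_ideal_solid:
  assumes "fuzzy_ideal \<mu> A" "c \<in> A" "fle \<mu> 0 y" "fle \<mu> y (fabs \<mu> c)"
  shows "y \<in> A"
  using assms fabs_of_nonneg[OF assms(3)] unfolding fuzzy_ideal_def fle_def by metis

lemma fuzzy_ideal_fabs_iff:
  assumes "fuzzy_ideal \<mu> A"
  shows "fabs \<mu> x \<in> A \<longleftrightarrow> x \<in> A"
proof
  assume "fabs \<mu> x \<in> A"
  moreover have "fle \<mu> (fabs \<mu> x) (fabs \<mu> (fabs \<mu> x))"
    by (simp add: fabs_of_nonneg[OF fabs_nonneg] fle_refl)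
  ultimately show "x \<in> A"
    using assms unfolding fuzzy_ideal_def fle_def by blast
qed (use assms fuzzy_ideal_solid fabs_nonneg fle_refl in blast)

lemma fuzzy_ideal_fpos_mem:
  assumes "fuzzy_ideal \<mu> A" "c \<in> A" "fle \<mu> x c"
  shows "fpos \<mu> x \<in> A"
proof (rule fuzzy_ideal_solid[OF assms(1,2) fpos_nonneg])
  show "fle \<mu> (fpos \<mu> x) (fabs \<mu> c)"
    using fpos_mono[OF assms(3)] fpos_le_fabs by (rule fle_trans)
qed

end

section \<open>The quotient order\<close>

lemma mem_coset: "y \<in> coset A f \<longleftrightarrow> y - f \<in> A"
  unfolding coset_def by (auto intro!: exI[of _ "y - f"])

lemma coset_eq_iff:
  assumes "subspace A"
  shows "coset A f = coset A g \<longleftrightarrow> f - g \<in> A"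
proof
  assume "coset A f = coset A g"
  moreover have "f \<in> coset A f"
    using assms by (simp add: mem_coset subspace_0)
  ultimately show "f - g \<in> A"
    by (simp add: mem_coset)
next
  assume fg: "f - g \<in> A"
  have "y - f \<in> A \<longleftrightarrow> y - g \<in> A" for y
    using subspace_add[OF assms _ fg, of "y - f"] subspace_diff[OF assms _ fg, of "y - g"]
    by auto
  then show "coset A f = coset A g"
    by (auto simp: mem_coset)
qed

lemma scaleR_image_coset:
  assumes "subspace A" "l \<noteq> 0"
  shows "(\<lambda>v. l *\<^sub>R v) ` coset A f = coset A (l *\<^sub>R f)"
proof (rule set_eqI)
  fix y
  have "y \<in> (\<lambda>v. l *\<^sub>R v) ` coset A f \<longleftrightarrow> inverse l *\<^sub>R y \<in> coset A f"
    using assms(2) by (auto simp: image_iff intro!: bexI[of _ "inverse l *\<^sub>R y"])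
  also have "\<dots> \<longleftrightarrow> inverse l *\<^sub>R (y - l *\<^sub>R f) \<in> A"
    using assms(2) by (simp add: mem_coset scaleR_diff_right)
  also have "\<dots> \<longleftrightarrow> y - l *\<^sub>R f \<in> A"
    using subspace_scale[OF assms(1), of _ l] subspace_scale[OF assms(1), of _ "inverse l"] assms(2)
    by fastforce
  finally show "y \<in> (\<lambda>v. l *\<^sub>R v) ` coset A f \<longleftrightarrow> y \<in> coset A (l *\<^sub>R f)"
    by (simp add: mem_coset)
qed

context fuzzy_riesz
begin

lemma quot_mu_coset_gt_half_iff:
  assumes "subspace A"
  shows "quot_mu \<mu> (coset A f) (coset A g) > 1/2 \<longleftrightarrow> (\<exists>a\<in>A. fle \<mu> f (g + a))"
proof -
  have "(\<exists>f1\<in>coset A f. \<exists>g1\<in>coset A g. fle \<mu> f1 g1) \<longleftrightarrow> (\<exists>a\<in>A. fle \<mu> f (g + a))"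
  proof
    assume "\<exists>f1\<in>coset A f. \<exists>g1\<in>coset A g. fle \<mu> f1 g1"
    then obtain a1 a2 where a: "a1 \<in> A" "a2 \<in> A" and le: "fle \<mu> (f + a1) (g + a2)"
      unfolding coset_def by blast
    from le have "fle \<mu> (f + a1 + - a1) (g + a2 + - a1)"
      by (rule fle_add_right)
    then have "fle \<mu> f (g + (a2 - a1))"
      by (simp add: algebra_simps)
    with subspace_diff[OF assms a(2,1)] show "\<exists>a\<in>A. fle \<mu> f (g + a)" ..
  next
    assume "\<exists>a\<in>A. fle \<mu> f (g + a)"
    then show "\<exists>f1\<in>coset A f. \<exists>g1\<in>coset A g. fle \<mu> f1 g1"
      using subspace_0[OF assms] unfolding coset_def by force
  qed
  moreover have "\<exists>a\<in>A. fle \<mu> f (g + a)" if "coset A f = coset A g"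
    using that coset_eq_iff[OF assms] by (intro bexI[of _ "f - g"]) (simp_all add: fle_refl)
  ultimately show ?thesis
    unfolding quot_mu_def fle_def by auto
qed

lemma quot_archimedean_iff:
  assumes "subspace A"
  shows "quot_archimedean \<mu> A \<longleftrightarrow>
    (\<forall>f g. (\<exists>a\<in>A. fle \<mu> 0 (f + a)) \<and> (\<forall>l>0. \<exists>a\<in>A. fle \<mu> (l *\<^sub>R f) (g + a)) \<longrightarrow> f \<in> A)"
proof -
  have image_coset: "(\<lambda>v. l *\<^sub>R v) ` coset A f = coset A (l *\<^sub>R f)" if "l > 0" for l f
    using scaleR_image_coset[OF assms] that by simp
  have "quot_archimedean \<mu> A \<longleftrightarrow> (\<forall>f. f \<notin> A \<and> (\<exists>a\<in>A. fle \<mu> 0 (f + a)) \<longrightarrow>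
      \<not> (\<exists>g. \<forall>l>0. \<exists>a\<in>A. fle \<mu> (l *\<^sub>R f) (g + a)))"
    unfolding quot_archimedean_def fuzzy_archimedean_on_def quot_space_def
    by (simp add: image_coset coset_eq_iff[OF assms] quot_mu_coset_gt_half_iff[OF assms]
        del: divide_less_eq_numeral1 cong: conj_cong)
  then show ?thesis
    by blast
qed

end

section \<open>Closedness conditions on an ideal\<close>

definition closed_under_increasing_ru_limits :: "('a::real_vector \<Rightarrow> 'a \<Rightarrow> real) \<Rightarrow> 'a set \<Rightarrow> bool"
  where "closed_under_increasing_ru_limits \<mu> A \<longleftrightarrow>
    (\<forall>xs x. (\<forall>n. xs n \<in> A) \<and> (\<forall>n. \<mu> 0 (xs n) > 1/2)
       \<and> (\<forall>m n. m \<le> n \<longrightarrow> fle \<mu> (xs m) (xs n))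
       \<and> ru_converges \<mu> xs x \<longrightarrow> x \<in> A)"

text \<open>The premise (n x - w)^+ \<in> A says that n x \<le> w modulo A, whence the name.\<close>

definition archimedean_modulo :: "('a::real_vector \<Rightarrow> 'a \<Rightarrow> real) \<Rightarrow> 'a set \<Rightarrow> bool"
  where "archimedean_modulo \<mu> A \<longleftrightarrow>
    (\<forall>x w. fle \<mu> 0 x \<and> fle \<mu> 0 w
       \<and> (\<forall>n::nat. n \<ge> 1 \<longrightarrow> fpos \<mu> (real n *\<^sub>R x - w) \<in> A) \<longrightarrow> x \<in> A)"

context fuzzy_riesz
begin

lemma ru_converges_fpos_diff_scaleR:
  assumes x: "fle \<mu> 0 x" and w: "fle \<mu> 0 w" and c: "\<And>n. 0 \<le> c n" "c \<longlonglongrightarrow> 0"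
  shows "ru_converges \<mu> (\<lambda>n. fpos \<mu> (x - c n *\<^sub>R w)) x"
  unfolding ru_converges_def
proof (intro exI[of _ w] conjI allI impI)
  show "fle \<mu> 0 w" by (fact w)
  fix e :: real assume "e > 0"
  then obtain N where N: "\<And>n. n \<ge> N \<Longrightarrow> c n < e"
    using order_tendstoD(2)[OF c(2)] unfolding eventually_sequentially by blast
  show "\<exists>N. \<forall>n>N. \<mu> (fabs \<mu> (x - fpos \<mu> (x - c n *\<^sub>R w))) (e *\<^sub>R w) > 1/2"
  proof (intro exI[of _ N] allI impI)
    fix n assume "n > N"
    define p where "p = fpos \<mu> (x - c n *\<^sub>R w)"
    have "fle \<mu> (x - c n *\<^sub>R w) (x - 0 *\<^sub>R w)"
      by (intro fle_diff_left_mono fle_scaleR_right_mono w c(1))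
    then have "fle \<mu> p x"
      unfolding p_def fpos_def using x by (simp add: fsup_least)
    then have p_le: "fle \<mu> 0 (x - p)"
      by (rule fle_iff_diff_nonneg[THEN iffD1])
    have "fle \<mu> (x - p) (x - (x - c n *\<^sub>R w))"
      unfolding p_def by (rule fle_diff_left_mono[OF fpos_ge_self])
    also have "\<dots> = c n *\<^sub>R w"
      by simp
    also have "fle \<mu> \<dots> (e *\<^sub>R w)"
      using N \<open>n > N\<close> by (intro fle_scaleR_right_mono w) (simp add: less_imp_le)
    finally show "\<mu> (fabs \<mu> (x - p)) (e *\<^sub>R w) > 1/2"
      unfolding fabs_of_nonneg[OF p_le] fle_def .
  qed
qed

lemma uniformly_fuzzy_closed_if_quot_archimedean:
  assumes ideal: "fuzzy_ideal \<mu> A" and arch: "quot_archimedean \<mu> A"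
  shows "uniformly_fuzzy_closed \<mu> A"
  unfolding uniformly_fuzzy_closed_def
proof (intro allI impI, elim conjE)
  fix xs x assume xs: "\<forall>n. xs n \<in> A" and "ru_converges \<mu> xs x"
  then obtain w where conv: "\<And>e. e > 0 \<Longrightarrow> \<exists>N. \<forall>n>N. fle \<mu> (fabs \<mu> (x - xs n)) (e *\<^sub>R w)"
    unfolding ru_converges_def fle_def by blast
  have A: "subspace A"
    using ideal by (rule fuzzy_ideal_subspace)
  have "\<exists>a\<in>A. fle \<mu> (l *\<^sub>R fabs \<mu> x) (w + a)" if "l > 0" for l
  proof -
    obtain N where N: "\<forall>n>N. fle \<mu> (fabs \<mu> (x - xs n)) (inverse l *\<^sub>R w)"
      using conv[of "inverse l"] \<open>l > 0\<close> by auto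
    define y where "y = xs (Suc N)"
    have close: "fle \<mu> (fabs \<mu> (x - y)) (inverse l *\<^sub>R w)"
      using N unfolding y_def by simp
    have y: "y \<in> A"
      using xs unfolding y_def by simp
    have "fle \<mu> (fabs \<mu> x) (fabs \<mu> (x - y) + fabs \<mu> y)"
      using fabs_triangle[of "x - y" y] by simp
    also have "fle \<mu> \<dots> (inverse l *\<^sub>R w + fabs \<mu> y)"
      using close by (rule fle_add_right)
    finally have "fle \<mu> (l *\<^sub>R fabs \<mu> x) (l *\<^sub>R (inverse l *\<^sub>R w + fabs \<mu> y))"
      using \<open>l > 0\<close> by (simp add: fle_scaleR_left_mono)
    moreover have "l *\<^sub>R fabs \<mu> y \<in> A"
      using y fuzzy_ideal_fabs_iff[OF ideal] subspace_scale[OF A] by blast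
    ultimately show ?thesis
      using \<open>l > 0\<close> by (auto simp: scaleR_add_right)
  qed
  moreover have "\<exists>a\<in>A. fle \<mu> 0 (fabs \<mu> x + a)"
    using fabs_nonneg subspace_0[OF A] by force
  ultimately have "fabs \<mu> x \<in> A"
    using arch unfolding quot_archimedean_iff[OF A] by blast
  then show "x \<in> A"
    by (simp add: fuzzy_ideal_fabs_iff[OF ideal])
qed

lemma archimedean_modulo_if_closed_under_increasing_ru_limits:
  assumes ideal: "fuzzy_ideal \<mu> A" and closed: "closed_under_increasing_ru_limits \<mu> A"
  shows "archimedean_modulo \<mu> A"
  unfolding archimedean_modulo_def
proof (intro allI impI, elim conjE)
  fix x w assume x: "fle \<mu> 0 x" and w: "fle \<mu> 0 w"
    and pos_parts: "\<forall>n::nat. n \<ge> 1 \<longrightarrow> fpos \<mu> (real n *\<^sub>R x - w) \<in> A"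
  define xs where "xs n = fpos \<mu> (x - inverse (real (Suc n)) *\<^sub>R w)" for n
  have "xs n \<in> A" for n
  proof -
    have "real (Suc n) *\<^sub>R xs n = fpos \<mu> (real (Suc n) *\<^sub>R x - w)"
      unfolding xs_def by (simp add: fpos_scaleR[symmetric] scaleR_diff_right)
    moreover have "fpos \<mu> (real (Suc n) *\<^sub>R x - w) \<in> A"
      using pos_parts[rule_format, of "Suc n"] by simp
    ultimately have "real (Suc n) *\<^sub>R xs n \<in> A"
      by simp
    then have "inverse (real (Suc n)) *\<^sub>R (real (Suc n) *\<^sub>R xs n) \<in> A"
      by (rule subspace_scale[OF fuzzy_ideal_subspace[OF ideal]])
    then show ?thesis
      by simp
  qed
  moreover have "fle \<mu> 0 (xs n)" for n
    unfolding xs_def by (rule fpos_nonneg)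
  moreover have "fle \<mu> (xs m) (xs n)" if "m \<le> n" for m n
    unfolding xs_def using that
    by (intro fpos_mono fle_diff_left_mono fle_scaleR_right_mono w) (simp add: field_simps)
  moreover have "ru_converges \<mu> xs x"
    unfolding xs_def using LIMSEQ_inverse_real_of_nat
    by (intro ru_converges_fpos_diff_scaleR x w) simp_all
  ultimately show "x \<in> A"
    using closed unfolding closed_under_increasing_ru_limits_def fle_def by blast
qed

lemma quot_archimedean_if_archimedean_modulo:
  assumes ideal: "fuzzy_ideal \<mu> A" and arch: "archimedean_modulo \<mu> A"
  shows "quot_archimedean \<mu> A"
proof -
  have A: "subspace A"
    using ideal by (rule fuzzy_ideal_subspace)
  show ?thesis
    unfolding quot_archimedean_iff[OF A]
  proof (intro allI impI, elim conjE)
    fix f g assume "\<exists>a\<in>A. fle \<mu> 0 (f + a)"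
      and bounded: "\<forall>l>0. \<exists>a\<in>A. fle \<mu> (l *\<^sub>R f) (g + a)"
    then obtain a0 where a0: "a0 \<in> A" "fle \<mu> 0 (f + a0)"
      by blast
    define x where "x = f + a0"
    have "fpos \<mu> (real n *\<^sub>R x - fpos \<mu> g) \<in> A" if "n \<ge> 1" for n :: nat
    proof -
      from that have "real n > 0"
        by simp
      with bounded obtain a where a: "a \<in> A" "fle \<mu> (real n *\<^sub>R f) (g + a)"
        by blast
      have "fle \<mu> (real n *\<^sub>R x - fpos \<mu> g) (real n *\<^sub>R x - g)"
        by (rule fle_diff_left_mono[OF fpos_ge_self])
      also have "fle \<mu> \<dots> (real n *\<^sub>R a0 + a)"
        using fle_diff_left_mono[OF a(2), of "real n *\<^sub>R x + a"]
        by (simp add: x_def algebra_simps)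
      finally show ?thesis
        using a subspace_add[OF A subspace_scale[OF A a0(1)]]
        by (intro fuzzy_ideal_fpos_mem[OF ideal]) auto
    qed
    with arch a0(2) have "x \<in> A"
      unfolding archimedean_modulo_def x_def using fpos_nonneg by blast
    then show "f \<in> A"
      using subspace_diff[OF A _ a0(1)] unfolding x_def by force
  qed
qed

end

theorem theorem3p8:
  fixes \<mu> :: "'a::real_vector \<Rightarrow> 'a \<Rightarrow> real" and A :: "'a set"
  assumes "fuzzy_riesz_space \<mu>" and "fuzzy_ideal \<mu> A"
  shows "(quot_archimedean \<mu> A \<longleftrightarrow> uniformly_fuzzy_closed \<mu> A)
       \<and> (uniformly_fuzzy_closed \<mu> A \<longleftrightarrow>
            (\<forall>xs x. (\<forall>n. xs n \<in> A) \<and> (\<forall>n. \<mu> 0 (xs n) > 1/2)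
                    \<and> (\<forall>m n. m \<le> n \<longrightarrow> fle \<mu> (xs m) (xs n))
                    \<and> ru_converges \<mu> xs x \<longrightarrow> x \<in> A))
       \<and> (uniformly_fuzzy_closed \<mu> A \<longleftrightarrow>
            (\<forall>x w. fle \<mu> 0 x \<and> fle \<mu> 0 w
                  \<and> (\<forall>n::nat. n \<ge> 1 \<longrightarrow> fpos \<mu> (real n *\<^sub>R x - w) \<in> A) \<longrightarrow> x \<in> A))"
proof -
  interpret fuzzy_riesz \<mu>
    by (fact fuzzy_riesz.intro[OF assms(1)])
  have "quot_archimedean \<mu> A \<Longrightarrow> uniformly_fuzzy_closed \<mu> A"
    by (rule uniformly_fuzzy_closed_if_quot_archimedean[OF assms(2)])
  moreover have "uniformly_fuzzy_closed \<mu> A \<Longrightarrow> closed_under_increasing_ru_limits \<mu> A"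
    unfolding uniformly_fuzzy_closed_def closed_under_increasing_ru_limits_def by blast
  moreover have "closed_under_increasing_ru_limits \<mu> A \<Longrightarrow> archimedean_modulo \<mu> A"
    by (rule archimedean_modulo_if_closed_under_increasing_ru_limits[OF assms(2)])
  moreover have "archimedean_modulo \<mu> A \<Longrightarrow> quot_archimedean \<mu> A"
    by (rule quot_archimedean_if_archimedean_modulo[OF assms(2)])
  ultimately show ?thesis
    unfolding closed_under_increasing_ru_limits_def archimedean_modulo_def by blast
qed

end
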